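(* Let $\rho:G\to GL(V)$ be a block representation with decomposition $V=W_k\supset\cdots\supset W_0=(0)$ and $K_j=\ker(G\to GL(V/W_j))$ with Lie algebras $\mathfrak k_j$, and let $m_j=\dim W_j-\dim W_{j-1}$. Choose a basis $\{w^{(j)}_i\}$ of $V$ such that $\{w^{(j)}_1,\dots,w^{(j)}_{m_j}\}$ is a complementary basis to $W_{j-1}$ in $W_j$ for each $j$, and a basis $\{v^{(j)}_i\}$ of $\mathfrak g$ such that $\{v^{(j)}_1,\dots,v^{(j)}_{m_j}\}$ is a complementary basis to $\mathfrak k_{j-1}$ in $\mathfrak k_j$ for each $j$. Order both bases first by $j$ and then by $i$. Then the coefficient matrix has block triangular form: e.g. if the vector fields $\xi_{v^{(j)}_i}$ form the columns, the rows are indexed by the basis of $V$, and descending order in $j$ is used, the matrix is lower block triangular with diagonal blocks $D_k,D_{k-1},\dots,D_1$, each $D_j$ an $m_j\times m_j$ matrix. Moreover $p_j=\det(D_j)$ are the relative coefficient determinants.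
   Context: For a rational representation of a connected complex linear algebraic group $G$ on $V$ with Lie algebra $\mathfrak g$, $\xi_v(x)=\frac{\partial}{\partial t}(\exp(tv)\cdot x)|_{t=0}$. The coefficient matrix w.r.t. bases $\{v_i\}$ of $\mathfrak g$ and $\{e_j\}$ of $V$ is $(a_{ji})$ with $\xi_{v_i}=\sum_j a_{ji}e_j$. Relative coefficient matrix: for a connected group $H$ acting on $U$ preserving $W$ with $\dim H=\dim W$ and acting trivially on $U/W$, the matrix $(a_{ji})$ with $\xi_{v_i}=\sum_j a_{ji}w_j$ (bases of $\mathrm{Lie}(H)$ and $W$); its determinant is the relative coefficient determinant. $H$ has a relatively open orbit in $W$ if some orbit's image under a linear projection $U\to W$ contains a nonempty Zariski open subset. Block representation: $\dim G=\dim V$ and $G$-invariant subspaces $V=W_k\supset\cdots\supset W_0=(0)$ with, for $K_j=\ker(G\to GL(V/W_j))$: $\dim K_j=\dim W_j$ for all $j$; the action of $K_j/K_{j-1}$ on $V/W_{j-1}$ has a relatively open orbit in $W_j/W_{j-1}$; and the relative coefficient determinants $p_j$ of $K_j/K_{j-1}$ on $W_j/W_{j-1}$ in $V/W_{j-1}$ (pulled back to $V$) are reduced and pairwise relatively prime in $\mathcal O_{V,0}$. *)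

theory Defs
  imports "HOL-Analysis.Analysis"
begin

text \<open>Vectors of V = C^n are elements of complex^'n; families of vectors / matrices
  (bases, images of Lie algebra basis elements) are indexed by nat.\<close>

definition cspan_idx :: "(nat \<Rightarrow> complex^'n) \<Rightarrow> nat set \<Rightarrow> (complex^'n) set" where
  "cspan_idx u I = {(\<Sum>i\<in>I. c i *s u i) | c. True}"

definition is_cbasis :: "(nat \<Rightarrow> complex^'n) \<Rightarrow> nat \<Rightarrow> bool" where
  "is_cbasis w n \<longleftrightarrow>
     (\<forall>c. (\<Sum>i<n. c i *s w i) = 0 \<longrightarrow> (\<forall>i<n. c i = 0)) \<and>
     (\<forall>y. \<exists>c. y = (\<Sum>i<n. c i *s w i))"

text \<open>Vector field xi_v(x) = d rho(v) x for v = sum c_i v_i, where A i = d rho(v_i).\<close>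
definition xi :: "(nat \<Rightarrow> complex^'n^'n) \<Rightarrow> nat \<Rightarrow> (nat \<Rightarrow> complex) \<Rightarrow> complex^'n \<Rightarrow> complex^'n" where
  "xi A n c x = (\<Sum>i<n. c i *s (A i *v x))"

definition coords :: "(nat \<Rightarrow> complex^'n) \<Rightarrow> nat \<Rightarrow> complex^'n \<Rightarrow> nat \<Rightarrow> complex" where
  "coords w n y = (THE c. (\<forall>l. n \<le> l \<longrightarrow> c l = 0) \<and> y = (\<Sum>l<n. c l *s w l))"

definition coeff_matrix :: "(nat \<Rightarrow> complex^'n) \<Rightarrow> (nat \<Rightarrow> complex^'n^'n) \<Rightarrow> nat
    \<Rightarrow> complex^'n \<Rightarrow> nat \<Rightarrow> nat \<Rightarrow> complex" where
  "coeff_matrix w A n x r i = coords w n (A i *v x) r"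

definition det_on :: "nat set \<Rightarrow> (nat \<Rightarrow> nat \<Rightarrow> complex) \<Rightarrow> complex" where
  "det_on S M = (\<Sum>p\<in>{p. p permutes S}. of_int (sign p) * (\<Prod>i\<in>S. M i (p i)))"

text \<open>Relative coefficient matrix: the classes of u t (t in S) form a basis of the
  quotient W/Wlow, and f i (i in S) are the vector fields on V of representatives of a
  basis of the Lie algebra of the quotient group; the induced field on V/Wlow at the class
  of x is the class of f i x, expanded in the quotient basis (pulled back to V).\<close>
definition rel_coeff_matrix :: "(complex^'n) set \<Rightarrow> (nat \<Rightarrow> complex^'n) \<Rightarrow> nat set
    \<Rightarrow> (nat \<Rightarrow> complex^'n \<Rightarrow> complex^'n) \<Rightarrow> complex^'n \<Rightarrow> nat \<Rightarrow> nat \<Rightarrow> complex" where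
  "rel_coeff_matrix Wlow u S f x l i =
     (THE c. (\<forall>t. t \<notin> S \<longrightarrow> c t = 0) \<and> f i x - (\<Sum>t\<in>S. c t *s u t) \<in> Wlow) l"

definition rel_coeff_det :: "(complex^'n) set \<Rightarrow> (nat \<Rightarrow> complex^'n) \<Rightarrow> nat set
    \<Rightarrow> (nat \<Rightarrow> complex^'n \<Rightarrow> complex^'n) \<Rightarrow> complex^'n \<Rightarrow> complex" where
  "rel_coeff_det Wlow u S f x = det_on S (rel_coeff_matrix Wlow u S f x)"

end

theory Submission
  imports Defs
begin

text \<open>Since \<open>K\<^sub>j\<close> acts trivially on \<open>V/W\<^sub>j\<close>, the vector field of every element of
  \<open>\<frak>k\<^sub>j = span {v\<^sub>i : i < d j}\<close> takes values in \<open>W\<^sub>j\<close>. In coordinates adapted to the flag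
  this kills every entry of the coefficient matrix in a column of block \<open>j'\<close> and a row of a
  later block \<open>j\<close>. For the diagonal block \<open>j\<close>, the columns \<open>A\<^sub>i x\<close> lie in \<open>W\<^sub>j\<close>, and expanding
  them modulo \<open>W\<^sub>j\<^sub>-\<^sub>1\<close> in the classes of \<open>w\<^sub>t\<close>, \<open>d(j-1) \<le> t < d j\<close>, just discards the
  coordinates below \<open>d(j-1)\<close>; so the relative coefficient matrix is the diagonal block itself,
  and so are the determinants.\<close>

lemma is_cbasis_coeff_unique:
  assumes "is_cbasis w n" "m \<le> n" "(\<Sum>l<m. c l *s w l) = (\<Sum>l<m. c' l *s w l)" "l < m"
  shows "c l = c' l"
proof -
  define e where "e = (\<lambda>l. if l < m then c l - c' l else 0)"
  have "(\<Sum>l<n. e l *s w l) = (\<Sum>l<m. e l *s w l)"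
    using assms(2) by (intro sum.mono_neutral_right) (auto simp: e_def)
  also have "\<dots> = (\<Sum>l<m. c l *s w l) - (\<Sum>l<m. c' l *s w l)"
    by (simp add: e_def vector_sub_rdistrib sum_subtractf)
  finally have "(\<Sum>l<n. e l *s w l) = 0"
    using assms(3) by simp
  then have "e l = 0"
    using assms(1,2,4) unfolding is_cbasis_def by auto
  then show ?thesis
    using assms(4) by (simp add: e_def)
qed

lemma coords_eq:
  assumes "is_cbasis w n" "y = (\<Sum>l<n. g l *s w l)"
  shows "coords w n y = (\<lambda>l. if l < n then g l else 0)"
  unfolding coords_def
proof (rule the_equality)
  fix c
  assume c: "(\<forall>l. n \<le> l \<longrightarrow> c l = 0) \<and> y = (\<Sum>l<n. c l *s w l)"
  show "c = (\<lambda>l. if l < n then g l else 0)"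
  proof
    fix l
    show "c l = (if l < n then g l else 0)"
      using c is_cbasis_coeff_unique[OF assms(1) order.refl, of c g l] assms(2) by auto
  qed
qed (use assms(2) in simp)

lemma cspan_idx_lessThan_eq_sum:
  assumes "y \<in> cspan_idx w {..<m}" "m \<le> n"
  obtains c where "y = (\<Sum>l<n. c l *s w l)" "\<And>l. m \<le> l \<Longrightarrow> c l = 0"
proof -
  obtain c where y: "y = (\<Sum>l<m. c l *s w l)"
    using assms(1) unfolding cspan_idx_def by auto
  have "y = (\<Sum>l<n. (if l < m then c l else 0) *s w l)"
    unfolding y using assms(2) by (intro sum.mono_neutral_cong_left) auto
  then show thesis
    by (rule that) simp
qed

lemma coords_eq_0_if_in_cspan_idx:
  assumes "is_cbasis w n" "y \<in> cspan_idx w {..<m}" "m \<le> n" "m \<le> l"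
  shows "coords w n y l = 0"
proof -
  obtain c where "y = (\<Sum>l<n. c l *s w l)" "\<And>l. m \<le> l \<Longrightarrow> c l = 0"
    using cspan_idx_lessThan_eq_sum[OF assms(2,3)] by blast
  with coords_eq[OF assms(1)] assms(4) show ?thesis
    by simp
qed

lemma sum_lessThan_split:
  fixes f :: "nat \<Rightarrow> 'a::comm_monoid_add"
  assumes "a \<le> b"
  shows "(\<Sum>l<b. f l) = (\<Sum>l<a. f l) + (\<Sum>l\<in>{a..<b}. f l)"
  using sum.atLeastLessThan_concat[of 0 a b f] assms by (simp add: atLeast0LessThan)

text \<open>The classes of \<open>w\<^sub>a, \<dots>, w\<^sub>b\<^sub>-\<^sub>1\<close> form a basis of \<open>span(w\<^sub>0, \<dots>, w\<^sub>b\<^sub>-\<^sub>1)/span(w\<^sub>0, \<dots>, w\<^sub>a\<^sub>-\<^sub>1)\<close>,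
  and the expansion of a class in it consists of the middle coordinates of a representative.\<close>

lemma rel_coeff_matrix_eq_coords:
  assumes w: "is_cbasis w n" and ab: "a \<le> b" and bn: "b \<le> n"
    and fx: "f i x \<in> cspan_idx w {..<b}"
  shows "rel_coeff_matrix (cspan_idx w {..<a}) w {a..<b} f x l i
           = (if l \<in> {a..<b} then coords w n (f i x) l else 0)"
proof -
  define S where "S = {a..<b}"
  define co where "co = coords w n (f i x)"
  have co0: "co l = 0" if "b \<le> l" for l
    unfolding co_def using coords_eq_0_if_in_cspan_idx[OF w fx bn that] .
  obtain g where "f i x = (\<Sum>l<n. g l *s w l)"
    using w unfolding is_cbasis_def by blast
  then have "f i x = (\<Sum>l<n. co l *s w l)"
    using coords_eq[OF w] by (simp add: co_def)
  also have "\<dots> = (\<Sum>l<b. co l *s w l)"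
    using bn co0 by (intro sum.mono_neutral_right) auto
  finally have fx_b: "f i x = (\<Sum>l<b. co l *s w l)" .
  then have fx_co: "f i x = (\<Sum>l<a. co l *s w l) + (\<Sum>t\<in>S. co t *s w t)"
    using sum_lessThan_split[OF ab] by (simp add: S_def)
  define cc where "cc = (\<lambda>t. if t \<in> S then co t else 0)"
  have "(THE c. (\<forall>t. t \<notin> S \<longrightarrow> c t = 0)
          \<and> f i x - (\<Sum>t\<in>S. c t *s w t) \<in> cspan_idx w {..<a}) = cc"
  proof (rule the_equality)
    have "(\<Sum>t\<in>S. cc t *s w t) = (\<Sum>t\<in>S. co t *s w t)"
      by (simp add: cc_def)
    then have "f i x - (\<Sum>t\<in>S. cc t *s w t) = (\<Sum>l<a. co l *s w l)"
      using fx_co by simp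
    then have "f i x - (\<Sum>t\<in>S. cc t *s w t) \<in> cspan_idx w {..<a}"
      unfolding cspan_idx_def by blast
    then show "(\<forall>t. t \<notin> S \<longrightarrow> cc t = 0) \<and> f i x - (\<Sum>t\<in>S. cc t *s w t) \<in> cspan_idx w {..<a}"
      by (simp add: cc_def)
  next
    fix c
    assume c: "(\<forall>t. t \<notin> S \<longrightarrow> c t = 0) \<and> f i x - (\<Sum>t\<in>S. c t *s w t) \<in> cspan_idx w {..<a}"
    then obtain e where e: "f i x - (\<Sum>t\<in>S. c t *s w t) = (\<Sum>l<a. e l *s w l)"
      unfolding cspan_idx_def by blast
    define h where "h = (\<lambda>l. if l < a then e l else c l)"
    have "(\<Sum>l<a. h l *s w l) = (\<Sum>l<a. e l *s w l)"
      by (simp add: h_def)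
    moreover have "(\<Sum>t\<in>S. h t *s w t) = (\<Sum>t\<in>S. c t *s w t)"
      by (simp add: h_def S_def)
    ultimately have "(\<Sum>l<b. h l *s w l) = (\<Sum>l<a. e l *s w l) + (\<Sum>t\<in>S. c t *s w t)"
      using sum_lessThan_split[OF ab, of "\<lambda>l. h l *s w l"] by (simp add: S_def)
    also have "\<dots> = (\<Sum>l<b. co l *s w l)"
      using e fx_b by (metis diff_add_cancel)
    finally have h_co: "h t = co t" if "t < b" for t
      using is_cbasis_coeff_unique[OF w bn] that by blast
    have "c t = co t" if "t \<in> S" for t
      using h_co[of t] that by (simp add: h_def S_def)
    then show "c = cc"
      using c by (auto simp: cc_def fun_eq_iff)
  qed
  then show ?thesis
    by (simp add: rel_coeff_matrix_def S_def cc_def co_def)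
qed

lemma det_on_cong:
  assumes "\<And>r i. r \<in> S \<Longrightarrow> i \<in> S \<Longrightarrow> M r i = N r i"
  shows "det_on S M = det_on S N"
  unfolding det_on_def
  by (intro sum.cong refl arg_cong2[where f = "(*)"] prod.cong)
     (auto intro!: assms simp: permutes_in_image)

lemma xi_unit:
  assumes "i < n"
  shows "xi A n (\<lambda>l. if l = i then 1 else 0) x = A i *v x"
proof -
  have "xi A n (\<lambda>l. if l = i then 1 else 0) x = (\<Sum>l<n. if l = i then A i *v x else 0)"
    unfolding xi_def by (rule sum.cong) auto
  then show ?thesis
    using assms by simp
qed

lemma vector_field_mem_if_kernel:
  assumes "\<forall>c. (\<forall>x. xi A n c x \<in> U) \<longleftrightarrow> (\<forall>i<n. m \<le> i \<longrightarrow> c i = 0)" "i < m" "m \<le> n"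
  shows "A i *v x \<in> U"
proof -
  have "\<forall>y. xi A n (\<lambda>l. if l = i then 1 else 0) y \<in> U"
    using assms by simp
  moreover have "xi A n (\<lambda>l. if l = i then 1 else 0) x = A i *v x"
    using assms(2,3) by (intro xi_unit) simp
  ultimately show ?thesis
    by metis
qed

theorem proposition2p5:
  fixes A :: "nat \<Rightarrow> complex^'n^'n"
    and w :: "nat \<Rightarrow> complex^'n"
    and W :: "nat \<Rightarrow> (complex^'n) set"
    and d :: "nat \<Rightarrow> nat"
    and k n :: nat
  assumes dimV: "n = CARD('n)"
    and d0: "d 0 = 0" and dk: "d k = n" and dmono: "\<forall>j<k. d j \<le> d (Suc j)"
    and wbasis: "is_cbasis w n"
    and W_adapted: "\<forall>j\<le>k. W j = cspan_idx w {..<d j}"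
    and W_invariant: "\<forall>j\<le>k. \<forall>i<n. \<forall>x\<in>W j. A i *v x \<in> W j"
    and lie_subalgebra: "\<forall>a<n. \<forall>b<n. \<exists>c. \<forall>x.
          A a *v (A b *v x) - A b *v (A a *v x) = (\<Sum>l<n. c l *s (A l *v x))"
    and kernels: "\<forall>j\<le>k. \<forall>c. (\<forall>x. xi A n c x \<in> W j) \<longleftrightarrow> (\<forall>i<n. d j \<le> i \<longrightarrow> c i = 0)"
  shows "(\<forall>x. \<forall>j\<in>{1..k}. \<forall>j'\<in>{1..k}. j' < j \<longrightarrow>
           (\<forall>r\<in>{d (j - 1)..<d j}. \<forall>i\<in>{d (j' - 1)..<d j'}. coeff_matrix w A n x r i = 0))
         \<and> (\<forall>j\<in>{1..k}. \<forall>x. det_on {d (j - 1)..<d j} (coeff_matrix w A n x)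
           = rel_coeff_det (W (j - 1)) w {d (j - 1)..<d j} (\<lambda>i y. A i *v y) x)"
proof -
  have d_mono: "d j' \<le> d j" if "j' \<le> j" "j \<le> k" for j j'
    by (rule lift_Suc_mono_le_ivl[of "{..<k}"]) (use dmono that in auto)
  have d_le_n: "d j \<le> n" if "j \<le> k" for j
    using d_mono[OF that order.refl] dk by simp
  have field_in_span: "A i *v x \<in> cspan_idx w {..<d j}" if "j \<le> k" "i < d j" for j i x
    using vector_field_mem_if_kernel[of A n "W j" "d j" i x] kernels W_adapted d_le_n that by simp
  have "coeff_matrix w A n x r i = 0"
    if "j' < j" "j \<le> k" "d (j - 1) \<le> r" "i < d j'" for x j j' r i
  proof -
    have "d j' \<le> r"
      using d_mono[of j' "j - 1"] that by fastforce
    then show ?thesis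
      unfolding coeff_matrix_def
      using coords_eq_0_if_in_cspan_idx[OF wbasis field_in_span d_le_n] that by simp
  qed
  moreover have "det_on {d (j - 1)..<d j} (coeff_matrix w A n x)
      = rel_coeff_det (W (j - 1)) w {d (j - 1)..<d j} (\<lambda>i y. A i *v y) x"
    if j: "1 \<le> j" "j \<le> k" for j x
    unfolding rel_coeff_det_def
  proof (rule det_on_cong)
    fix r i
    assume r: "r \<in> {d (j - 1)..<d j}" and i: "i \<in> {d (j - 1)..<d j}"
    have "d (j - 1) \<le> d j"
      using d_mono j by simp
    moreover have "A i *v x \<in> cspan_idx w {..<d j}"
      using field_in_span j(2) i by simp
    ultimately show "coeff_matrix w A n x r i
        = rel_coeff_matrix (W (j - 1)) w {d (j - 1)..<d j} (\<lambda>i y. A i *v y) x r i"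
      using rel_coeff_matrix_eq_coords[where f = "\<lambda>i y. A i *v y", OF wbasis _ d_le_n[OF j(2)]]
        r W_adapted j by (simp add: coeff_matrix_def)
  qed
  ultimately show ?thesis
    by auto
qed

end
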